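(* Let $h \ge 1$, $N_H \ge 1$, $f \ge 1$ be integers and let $R \in (0,1]$. Let the state matrix $(\mathbf{F}_1, \ldots, \mathbf{F}_h)$ of an IBF with $h$ hash functions, $N = h N_H$ cells and $f$ stored elements be chosen uniformly at random from $\mathcal{S}_{N_H,f}^h$, and let $Y$ be the number of elements extracted by the extraction process. Then the probability that the extraction fails to achieve extraction rate $R$, i.e. $\Pr(Y/f < R)$, satisfies $$\Pr\left(\frac{Y}{f} < R\right) \le 1 - \sum_{e = \lceil R f \rceil}^{f} \frac{\Theta(N_H, f, h, e)}{N_H^{h f}}.$$ Equivalently, for every integer $0 \le y \le f$, $\Pr(Y \ge y) \ge \sum_{e=y}^{f} \Theta(N_H, f, h, e)/N_H^{hf}$.
   Context: For integers $n, m \ge 0$, let $\mathcal{S}_{n,m}$ denote the set of all $n \times m$ binary matrices in which every column has Hamming weight exactly one (so $|\mathcal{S}_{n,m}| = n^m$; $\mathcal{S}_{n,0}$ consists of the single empty matrix, and $\mathcal{S}_{0,m} = \emptyset$ for $m \ge 1$). A binary matrix is called a stopping matrix if none of its rows has Hamming weight exactly one. Let $z(n, m)$ denote the number of matrices in $\mathcal{S}_{n,m}$ that are stopping matrices. The state matrix of an IBF with $h$ hash functions, $N = hN_H$ cells (partitioned into $h$ sub-filters of $N_H$ cells, the $i$-th hash function mapping into the $i$-th sub-filter) and $f$ inserted elements $x_1,\dots,x_f$ is the $h$-tuple $(\mathbf{F}_1,\dots,\mathbf{F}_h)$ with $\mathbf{F}_i \in \mathcal{S}_{N_H,f}$, where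 $\mathbf{F}_i$ has a $1$ in row $r$, column $j$ iff the $i$-th hash function maps $x_j$ to cell $r$ of the $i$-th sub-filter. Extraction (peeling) process: columns are removed simultaneously from all blocks; while there is some $i \in [h]$ and some row of $\mathbf{F}_i$ whose restriction to the not-yet-removed columns has Hamming weight exactly one, remove (extract) the column containing that unique $1$; stop when no block has such a row. The number of extracted elements is the number of removed columns (independent of the order of removals). For $e \in \mathbb{N}$, $\mathcal{T}_e$ is the set of vectors $\mathbf{b} \in \mathbb{N}^h$ with all entries in $\{0, \ldots, e\}$, and $\xi(\mathbf{b}) = \sum_i b_i$. The function $\Psi$ is defined by $\Psi(0, \mathbf{0}) = 1$, $\Psi(0, \mathbf{b}) = 0$ for $\mathbf{b} \ne \mathbf{0}$, and for $e \ge 1$: $\Psi(e, \mathbf{b}) = \prod_{i=1}^{h} \binom{e}{b_i} - \sum_{j=0}^{e-1} \binom{e}{j} \Psi(j, \mathbf{b})$. Finally $$\Theta(N_H, f, h, e) = \binom{f}{e} \sum_{\mathbf{b} \in \mathcal{T}_e \,:\, \xi(\mathbf{b}) \ge e} \left( \Psi(e, \mathbf{b}) \prod_{i=1}^{h} \left[ \binom{N_H}{b_i}\, b_i!\, z(N_H - b_i, f - b_i) \right] \right).$$ *)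

theory Defs
  imports "HOL-Probability.Probability"
begin

text \<open>Binary matrices are represented as predicates M r c (row r, column c).\<close>

definition S_mat :: "nat \<Rightarrow> nat \<Rightarrow> (nat \<Rightarrow> nat \<Rightarrow> bool) set" where
  "S_mat n m = {M. (\<forall>r c. M r c \<longrightarrow> r < n \<and> c < m) \<and> (\<forall>c<m. card {r. M r c} = 1)}"

definition stopping_matrix :: "nat \<Rightarrow> (nat \<Rightarrow> nat \<Rightarrow> bool) \<Rightarrow> bool" where
  "stopping_matrix n M \<longleftrightarrow> (\<forall>r<n. card {c. M r c} \<noteq> 1)"

definition z_count :: "nat \<Rightarrow> nat \<Rightarrow> nat" where
  "z_count n m = card {M \<in> S_mat n m. stopping_matrix n M}"

definition ibf_states :: "nat \<Rightarrow> nat \<Rightarrow> nat \<Rightarrow> (nat \<Rightarrow> nat \<Rightarrow> nat \<Rightarrow> bool) set" where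
  "ibf_states h NH f = {F. (\<forall>i<h. F i \<in> S_mat NH f) \<and> (\<forall>i\<ge>h. F i = (\<lambda>_ _. False))}"

text \<open>One peeling step: K is the set of not-yet-removed columns; if some row of some block
  restricted to K has weight exactly one, the column holding that 1 is removed.\<close>

definition peel_step :: "nat \<Rightarrow> nat \<Rightarrow> (nat \<Rightarrow> nat \<Rightarrow> nat \<Rightarrow> bool) \<Rightarrow> nat set \<Rightarrow> nat set \<Rightarrow> bool" where
  "peel_step h NH F K K' \<longleftrightarrow>
     (\<exists>i<h. \<exists>r<NH. \<exists>c. {c' \<in> K. F i r c'} = {c} \<and> K' = K - {c})"

definition peel_terminal :: "nat \<Rightarrow> nat \<Rightarrow> (nat \<Rightarrow> nat \<Rightarrow> nat \<Rightarrow> bool) \<Rightarrow> nat set \<Rightarrow> bool" where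
  "peel_terminal h NH F K \<longleftrightarrow> \<not> (\<exists>K'. peel_step h NH F K K')"

text \<open>Final set of remaining columns of (some) run of the extraction process
  (the result is independent of the order of removals).\<close>

definition peel_final :: "nat \<Rightarrow> nat \<Rightarrow> nat \<Rightarrow> (nat \<Rightarrow> nat \<Rightarrow> nat \<Rightarrow> bool) \<Rightarrow> nat set" where
  "peel_final h NH f F = (SOME K. (peel_step h NH F)\<^sup>*\<^sup>* {0..<f} K \<and> peel_terminal h NH F K)"

definition extracted :: "nat \<Rightarrow> nat \<Rightarrow> nat \<Rightarrow> (nat \<Rightarrow> nat \<Rightarrow> nat \<Rightarrow> bool) \<Rightarrow> nat" where
  "extracted h NH f F = card ({0..<f} - peel_final h NH f F)"

text \<open>\<Psi>(e, b) for b \<in> \<nat>^h represented as a function nat \<Rightarrow> nat (only indices < h matter).\<close>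

fun Psi :: "nat \<Rightarrow> nat \<Rightarrow> (nat \<Rightarrow> nat) \<Rightarrow> int" where
  "Psi h e b =
     (if e = 0 then (if (\<forall>i<h. b i = 0) then 1 else 0)
      else (\<Prod>i<h. int (e choose b i)) - (\<Sum>j<e. int (e choose j) * Psi h j b))"

declare Psi.simps[simp del]

definition T_set :: "nat \<Rightarrow> nat \<Rightarrow> (nat \<Rightarrow> nat) set" where
  "T_set h e = PiE {..<h} (\<lambda>_. {0..e})"

definition xi :: "nat \<Rightarrow> (nat \<Rightarrow> nat) \<Rightarrow> nat" where
  "xi h b = (\<Sum>i<h. b i)"

definition Theta :: "nat \<Rightarrow> nat \<Rightarrow> nat \<Rightarrow> nat \<Rightarrow> int" where
  "Theta NH f h e = int (f choose e) *
     (\<Sum>b \<in> {b \<in> T_set h e. xi h b \<ge> e}.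
        Psi h e b * (\<Prod>i<h. int ((NH choose b i) * fact (b i) * z_count (NH - b i) (f - b i))))"

end

theory Submission
  imports Defs
begin

text \<open>
  A column that is the unique 1 of some row of some block is removed in the first round of
  peeling, so the number X of such first-round columns never exceeds the number Y of extracted
  columns, and \<open>Pr(Y \<ge> y) \<ge> Pr(X \<ge> y)\<close>. The law of X is computed exactly.
  A block with a prescribed set S of k first-round columns is an injection of S into the rows
  together with a map of the other columns into the other rows none of whose fibres is a
  singleton: there are \<open>C(N\<^sub>H, k) k! z(N\<^sub>H - k, f - k)\<close> of them. A state with first-round set E
  is an h-tuple of blocks whose first-round sets cover E. Grouping the h-tuples of subsets of E of
  sizes b by their union gives \<open>\<Prod>\<^sub>i C(e, b\<^sub>i) = \<Sum>\<^bsub>U \<subseteq> E\<^esub> #covers(U, b)\<close>, which is exactly the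
  recursion defining \<open>\<Psi>\<close>; hence \<open>\<Psi>(e, b)\<close> counts the covers of E of sizes b, and summing over
  the \<open>C(f, e)\<close> choices of E yields \<open>\<Theta>\<close>.
\<close>

section \<open>Matrices with columns of weight one as functions\<close>

text \<open>A matrix in S_mat is the incidence matrix of the map sending each column to the row
  holding its 1.\<close>

definition mat_of_fun :: "nat \<Rightarrow> (nat \<Rightarrow> nat) \<Rightarrow> nat \<Rightarrow> nat \<Rightarrow> bool" where
  "mat_of_fun m \<phi> = (\<lambda>r c. c < m \<and> \<phi> c = r)"

lemma S_mat_column_unique:
  assumes "M \<in> S_mat n m" and "c < m"
  shows "\<exists>!r. M r c"
proof -
  obtain r where "{r. M r c} = {r}"
    using assms by (auto simp: S_mat_def card_1_singleton_iff)
  then show ?thesis by (metis mem_Collect_eq singletonD singletonI)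
qed

lemma bij_betw_mat_of_fun: "bij_betw (mat_of_fun m) ({0..<m} \<rightarrow>\<^sub>E {0..<n}) (S_mat n m)"
proof (rule bij_betw_byWitness[where f' = "\<lambda>M. \<lambda>c\<in>{0..<m}. THE r. M r c"])
  show "\<forall>\<phi>\<in>{0..<m} \<rightarrow>\<^sub>E {0..<n}. (\<lambda>c\<in>{0..<m}. THE r. mat_of_fun m \<phi> r c) = \<phi>"
    by (auto simp: mat_of_fun_def PiE_iff extensional_def)
  show "mat_of_fun m ` ({0..<m} \<rightarrow>\<^sub>E {0..<n}) \<subseteq> S_mat n m"
    by (auto simp: mat_of_fun_def S_mat_def)
  have row: "M (THE r. M r c) c" if "M \<in> S_mat n m" "c < m" for M c
    using theI'[OF S_mat_column_unique[OF that]] .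
  show "\<forall>M\<in>S_mat n m. mat_of_fun m (\<lambda>c\<in>{0..<m}. THE r. M r c) = M"
  proof (intro ballI ext)
    fix M r c assume M: "M \<in> S_mat n m"
    show "mat_of_fun m (\<lambda>c\<in>{0..<m}. THE r. M r c) r c = M r c"
    proof
      assume "mat_of_fun m (\<lambda>c\<in>{0..<m}. THE r. M r c) r c"
      then show "M r c" using row[OF M] by (auto simp: mat_of_fun_def)
    next
      assume "M r c"
      moreover from this have "c < m" using M by (auto simp: S_mat_def)
      ultimately show "mat_of_fun m (\<lambda>c\<in>{0..<m}. THE r. M r c) r c"
        using S_mat_column_unique[OF M] by (auto simp: mat_of_fun_def intro: the_equality)
    qed
  qed
  show "(\<lambda>M. \<lambda>c\<in>{0..<m}. THE r. M r c) ` S_mat n m \<subseteq> {0..<m} \<rightarrow>\<^sub>E {0..<n}"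
  proof (rule image_subsetI)
    fix M assume M: "M \<in> S_mat n m"
    have "(THE r. M r c) < n" if "c < m" for c
      using row[OF M that] M by (auto simp: S_mat_def)
    then show "(\<lambda>c\<in>{0..<m}. THE r. M r c) \<in> {0..<m} \<rightarrow>\<^sub>E {0..<n}" by auto
  qed
qed

lemma finite_S_mat: "finite (S_mat n m)"
  using bij_betw_finite[OF bij_betw_mat_of_fun] by (auto intro: finite_PiE)

lemma card_S_mat: "card (S_mat n m) = n ^ m"
  using bij_betw_same_card[OF bij_betw_mat_of_fun, of m n] by (simp add: card_funcsetE)

lemma card_S_mat_Collect:
  "card {M \<in> S_mat n m. P M} = card {\<phi> \<in> {0..<m} \<rightarrow>\<^sub>E {0..<n}. P (mat_of_fun m \<phi>)}"
proof -
  have "bij_betw (mat_of_fun m) {\<phi> \<in> {0..<m} \<rightarrow>\<^sub>E {0..<n}. P (mat_of_fun m \<phi>)} {M \<in> S_mat n m. P M}"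
    by (rule bij_betw_Collect[OF bij_betw_mat_of_fun]) simp
  then show ?thesis by (simp add: bij_betw_same_card)
qed

section \<open>Maps without singleton fibres\<close>

definition stopping_funs :: "'a set \<Rightarrow> 'b set \<Rightarrow> ('a \<Rightarrow> 'b) set" where
  "stopping_funs A B = {\<phi> \<in> A \<rightarrow>\<^sub>E B. \<forall>r\<in>B. card {c\<in>A. \<phi> c = r} \<noteq> 1}"

lemma finite_stopping_funs: "finite A \<Longrightarrow> finite B \<Longrightarrow> finite (stopping_funs A B)"
  unfolding stopping_funs_def by (rule finite_subset[of _ "A \<rightarrow>\<^sub>E B"]) (auto intro: finite_PiE)

lemma z_count_eq_card_stopping_funs: "z_count n m = card (stopping_funs {0..<m} {0..<n})"
proof -
  have "{c. mat_of_fun m \<phi> r c} = {c\<in>{0..<m}. \<phi> c = r}" for \<phi> r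
    by (auto simp: mat_of_fun_def)
  then show ?thesis
    by (simp add: z_count_def stopping_matrix_def card_S_mat_Collect stopping_funs_def Ball_def)
qed

lemma card_stopping_funs_le:
  assumes "finite A'" "finite B'" and \<alpha>: "bij_betw \<alpha> A' A" and \<beta>: "bij_betw \<beta> B B'"
  shows "card (stopping_funs A B) \<le> card (stopping_funs A' B')"
proof -
  define T where "T \<phi> = restrict (\<beta> \<circ> \<phi> \<circ> \<alpha>) A'" for \<phi>
  have maps: "\<phi> (\<alpha> c) \<in> B" if "\<phi> \<in> A \<rightarrow>\<^sub>E B" "c \<in> A'" for \<phi> c
    using that \<alpha> by (auto simp: bij_betw_def)
  have fibre: "card {c\<in>A'. T \<phi> c = \<beta> r} = card {x\<in>A. \<phi> x = r}"
    if "\<phi> \<in> A \<rightarrow>\<^sub>E B" "r \<in> B" for \<phi> r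
  proof -
    have "{c\<in>A'. T \<phi> c = \<beta> r} = {c\<in>A'. \<phi> (\<alpha> c) = r}"
      using maps[OF that(1)] \<beta> that(2) by (auto simp: T_def bij_betw_def dest: inj_onD)
    moreover have "bij_betw \<alpha> {c\<in>A'. \<phi> (\<alpha> c) = r} {x\<in>A. \<phi> x = r}"
      using \<alpha> by (rule bij_betw_Collect) simp
    ultimately show ?thesis by (simp add: bij_betw_same_card)
  qed
  have "inj_on T (stopping_funs A B)"
  proof (rule inj_onI)
    fix \<phi> \<psi> assume \<phi>: "\<phi> \<in> stopping_funs A B" and \<psi>: "\<psi> \<in> stopping_funs A B" and "T \<phi> = T \<psi>"
    have "\<phi> x = \<psi> x" if "x \<in> A" for x
    proof -
      obtain c where c: "c \<in> A'" "x = \<alpha> c" using \<alpha> \<open>x \<in> A\<close> by (auto simp: bij_betw_def)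
      then have "\<beta> (\<phi> x) = \<beta> (\<psi> x)" using \<open>T \<phi> = T \<psi>\<close> by (metis T_def comp_apply restrict_apply')
      moreover have "\<phi> x \<in> B" "\<psi> x \<in> B" using \<phi> \<psi> that by (auto simp: stopping_funs_def)
      ultimately show ?thesis using \<beta> by (auto simp: bij_betw_def dest: inj_onD)
    qed
    then show "\<phi> = \<psi>"
      using \<phi> \<psi> by (auto simp: stopping_funs_def intro: PiE_ext)
  qed
  moreover have "T ` stopping_funs A B \<subseteq> stopping_funs A' B'"
  proof (rule image_subsetI)
    fix \<phi> assume \<phi>: "\<phi> \<in> stopping_funs A B"
    then have "T \<phi> \<in> A' \<rightarrow>\<^sub>E B'"
      using maps \<beta> by (auto simp: T_def stopping_funs_def bij_betw_def)
    moreover have "card {c\<in>A'. T \<phi> c = r'} \<noteq> 1" if "r' \<in> B'" for r'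
      using that \<phi> \<beta> fibre by (auto simp: stopping_funs_def bij_betw_def)
    ultimately show "T \<phi> \<in> stopping_funs A' B'" by (simp add: stopping_funs_def)
  qed
  ultimately show ?thesis
    using assms by (intro card_inj_on_le finite_stopping_funs)
qed

lemma card_stopping_funs_eq:
  assumes "finite A" "finite A'" "finite B" "finite B'" "card A = card A'" "card B = card B'"
  shows "card (stopping_funs A B) = card (stopping_funs A' B')"
proof -
  obtain \<alpha> \<alpha>' \<beta> \<beta>' where "bij_betw \<alpha> A' A" "bij_betw \<alpha>' A A'" "bij_betw \<beta> B B'" "bij_betw \<beta>' B' B"
    using assms finite_same_card_bij by metis
  with assms show ?thesis by (meson card_stopping_funs_le le_antisym)
qed

definition singleton_points :: "'a set \<Rightarrow> ('a \<Rightarrow> 'b) \<Rightarrow> 'a set" where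
  "singleton_points A \<phi> = {c\<in>A. \<forall>c'\<in>A. \<phi> c' = \<phi> c \<longrightarrow> c' = c}"

lemma singleton_points_split:
  assumes \<phi>: "\<phi> \<in> A \<rightarrow>\<^sub>E B" and S: "singleton_points A \<phi> = S"
  shows "restrict \<phi> S \<in> {\<psi> \<in> S \<rightarrow>\<^sub>E B. inj_on \<psi> S}"
    and "restrict \<phi> (A - S) \<in> stopping_funs (A - S) (B - \<phi> ` S)"
proof -
  have unique: "c' = c" if "c \<in> S" "c' \<in> A" "\<phi> c' = \<phi> c" for c c'
    using that S by (auto simp: singleton_points_def)
  show "restrict \<phi> S \<in> {\<psi> \<in> S \<rightarrow>\<^sub>E B. inj_on \<psi> S}"
    using \<phi> S unique by (auto simp: singleton_points_def inj_on_def)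
  have "\<phi> c \<in> B - \<phi> ` S" if "c \<in> A - S" for c
    using that \<phi> unique by force
  moreover have "card {c\<in>A - S. \<phi> c = r} \<noteq> 1" if r: "r \<in> B - \<phi> ` S" for r
  proof
    assume "card {c\<in>A - S. \<phi> c = r} = 1"
    then obtain c0 where c0: "{c\<in>A - S. \<phi> c = r} = {c0}" by (auto simp: card_1_singleton_iff)
    then have c0': "c0 \<in> A - S" "\<phi> c0 = r" by auto
    have "c' = c0" if "c' \<in> A" "\<phi> c' = \<phi> c0" for c'
    proof (cases "c' \<in> S")
      case True
      then show ?thesis using that c0' r by auto
    next
      case False
      then have "c' \<in> {c\<in>A - S. \<phi> c = r}" using that c0' by auto
      then show ?thesis using c0 by auto
    qed
    then have "c0 \<in> singleton_points A \<phi>" using c0 by (auto simp: singleton_points_def)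
    then show False using S c0 by auto
  qed
  moreover have "{c\<in>A - S. restrict \<phi> (A - S) c = r} = {c\<in>A - S. \<phi> c = r}" for r
    by auto
  ultimately show "restrict \<phi> (A - S) \<in> stopping_funs (A - S) (B - \<phi> ` S)"
    unfolding stopping_funs_def by auto
qed

lemma singleton_points_glue:
  assumes "S \<subseteq> A" and \<psi>: "\<psi> \<in> S \<rightarrow>\<^sub>E B" "inj_on \<psi> S"
    and g: "g \<in> stopping_funs (A - S) (B - \<psi> ` S)"
  defines "\<phi> \<equiv> \<lambda>c. if c \<in> S then \<psi> c else g c"
  shows "\<phi> \<in> A \<rightarrow>\<^sub>E B" and "singleton_points A \<phi> = S"
proof -
  have gB: "g c \<in> B - \<psi> ` S" if "c \<in> A - S" for c
    using g that by (auto simp: stopping_funs_def)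
  show "\<phi> \<in> A \<rightarrow>\<^sub>E B"
    using \<psi> g gB \<open>S \<subseteq> A\<close> by (auto simp: \<phi>_def stopping_funs_def PiE_iff extensional_def)
  show "singleton_points A \<phi> = S"
  proof
    show "S \<subseteq> singleton_points A \<phi>"
      using \<psi> gB \<open>S \<subseteq> A\<close> by (force simp: singleton_points_def \<phi>_def inj_on_def)
    show "singleton_points A \<phi> \<subseteq> S"
    proof
      fix c assume c: "c \<in> singleton_points A \<phi>"
      show "c \<in> S"
      proof (rule ccontr)
        assume "c \<notin> S"
        with c have "{x\<in>A - S. g x = g c} = {c}"
          by (auto simp: singleton_points_def \<phi>_def)
        then have "card {x\<in>A - S. g x = g c} = 1" by simp
        moreover have "c \<in> A - S" using c \<open>c \<notin> S\<close> by (auto simp: singleton_points_def)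
        ultimately show False
          using g gB unfolding stopping_funs_def by blast
      qed
    qed
  qed
qed

lemma prod_diff_eq_choose_mult_fact: "(\<Prod>i = 0..<k. (n::nat) - i) = (n choose k) * fact k"
proof (induction k)
  case 0
  then show ?case by simp
next
  case (Suc k)
  have "(\<Prod>i = 0..<Suc k. n - i) = (n choose k) * (n - k) * fact k"
    using Suc by simp
  also have "(n choose k) * (n - k) = (n choose Suc k) * Suc k"
    by (metis binomial_absorb_comp binomial_absorption mult.commute)
  also have "(n choose Suc k) * Suc k * fact k = (n choose Suc k) * fact (Suc k)"
    by (simp only: fact_Suc of_nat_id mult.assoc)
  finally show ?case .
qed

lemma card_inj_funcset:
  "finite S \<Longrightarrow> finite B \<Longrightarrow> card {\<psi> \<in> S \<rightarrow>\<^sub>E B. inj_on \<psi> S} = (card B choose card S) * fact (card S)"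
  using card_inj_on_subset_funcset[of S B S] prod_diff_eq_choose_mult_fact by simp

lemma card_singleton_points_eq:
  assumes "finite A" "finite B" "S \<subseteq> A"
  shows "card {\<phi> \<in> A \<rightarrow>\<^sub>E B. singleton_points A \<phi> = S} =
         (card B choose card S) * fact (card S) * card (stopping_funs {0..<card A - card S} {0..<card B - card S})"
proof -
  define I where "I = {\<psi> \<in> S \<rightarrow>\<^sub>E B. inj_on \<psi> S}"
  define N where "N \<psi> = stopping_funs (A - S) (B - \<psi> ` S)" for \<psi>
  have "finite S" using assms finite_subset by blast
  have card_N: "card (N \<psi>) = card (stopping_funs {0..<card A - card S} {0..<card B - card S})"
    if "\<psi> \<in> I" for \<psi>
  proof -
    have "\<psi> ` S \<subseteq> B" "inj_on \<psi> S" using that by (auto simp: I_def)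
    then have "card (B - \<psi> ` S) = card B - card S"
      using card_Diff_subset[of "\<psi> ` S" B] card_image[of \<psi> S] \<open>finite S\<close> by simp
    then show ?thesis
      using assms \<open>finite S\<close> unfolding N_def by (intro card_stopping_funs_eq) (auto simp: card_Diff_subset)
  qed
  have "bij_betw (\<lambda>\<phi>. (restrict \<phi> S, restrict \<phi> (A - S)))
          {\<phi> \<in> A \<rightarrow>\<^sub>E B. singleton_points A \<phi> = S} (Sigma I N)"
  proof (rule bij_betw_byWitness[where f' = "\<lambda>(\<psi>, g) c. if c \<in> S then \<psi> c else g c"])
    show "\<forall>\<phi>\<in>{\<phi> \<in> A \<rightarrow>\<^sub>E B. singleton_points A \<phi> = S}.
            (\<lambda>(\<psi>, g) c. if c \<in> S then \<psi> c else g c) (restrict \<phi> S, restrict \<phi> (A - S)) = \<phi>"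
      using assms(3) by (auto simp: PiE_iff extensional_def)
    show "\<forall>p\<in>Sigma I N. (\<lambda>\<phi>. (restrict \<phi> S, restrict \<phi> (A - S)))
            ((\<lambda>(\<psi>, g) c. if c \<in> S then \<psi> c else g c) p) = p"
      by (auto simp: I_def N_def stopping_funs_def PiE_iff extensional_def)
    show "(\<lambda>\<phi>. (restrict \<phi> S, restrict \<phi> (A - S))) ` {\<phi> \<in> A \<rightarrow>\<^sub>E B. singleton_points A \<phi> = S} \<subseteq> Sigma I N"
      using singleton_points_split by (fastforce simp: I_def N_def)
    show "(\<lambda>(\<psi>, g) c. if c \<in> S then \<psi> c else g c) ` Sigma I N \<subseteq> {\<phi> \<in> A \<rightarrow>\<^sub>E B. singleton_points A \<phi> = S}"
    proof (rule image_subsetI)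
      fix p assume "p \<in> Sigma I N"
      then obtain \<psi> g where p: "p = (\<psi>, g)" and \<psi>: "\<psi> \<in> S \<rightarrow>\<^sub>E B" "inj_on \<psi> S"
        and g: "g \<in> stopping_funs (A - S) (B - \<psi> ` S)"
        by (auto simp: I_def N_def)
      from p singleton_points_glue[OF assms(3) \<psi> g]
      show "(\<lambda>(\<psi>, g) c. if c \<in> S then \<psi> c else g c) p \<in> {\<phi> \<in> A \<rightarrow>\<^sub>E B. singleton_points A \<phi> = S}"
        by simp
    qed
  qed
  moreover have "finite I"
    unfolding I_def using \<open>finite S\<close> assms(2) by (rule finite_subset[rotated, OF finite_PiE]) auto
  moreover have "finite (N \<psi>)" for \<psi>
    using assms by (simp add: N_def finite_stopping_funs)
  ultimately have "card {\<phi> \<in> A \<rightarrow>\<^sub>E B. singleton_points A \<phi> = S} = (\<Sum>\<psi>\<in>I. card (N \<psi>))"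
    by (simp add: bij_betw_same_card card_SigmaI)
  also have "\<dots> = card I * card (stopping_funs {0..<card A - card S} {0..<card B - card S})"
    using card_N by simp
  finally show ?thesis
    using assms \<open>finite S\<close> by (simp add: I_def card_inj_funcset)
qed

section \<open>Blocks with prescribed first-round columns\<close>

definition singleton_cols :: "nat \<Rightarrow> (nat \<Rightarrow> nat \<Rightarrow> bool) \<Rightarrow> nat set" where
  "singleton_cols n M = {c. \<exists>r<n. {c'. M r c'} = {c}}"

lemma singleton_cols_mat_of_fun:
  assumes \<phi>: "\<phi> \<in> {0..<m} \<rightarrow>\<^sub>E {0..<n}"
  shows "singleton_cols n (mat_of_fun m \<phi>) = singleton_points {0..<m} \<phi>"
proof -
  have "c \<in> singleton_cols n (mat_of_fun m \<phi>) \<longleftrightarrow> c \<in> singleton_points {0..<m} \<phi>" for c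
  proof
    assume "c \<in> singleton_cols n (mat_of_fun m \<phi>)"
    then obtain r where "{c'. mat_of_fun m \<phi> r c'} = {c}"
      unfolding singleton_cols_def by blast
    then have r: "{c'. c' < m \<and> \<phi> c' = r} = {c}"
      by (simp add: mat_of_fun_def)
    from r have "c \<in> {c'. c' < m \<and> \<phi> c' = r}" by simp
    then have c: "c < m" "\<phi> c = r" by simp_all
    have unique: "c' = c" if "c' < m" "\<phi> c' = \<phi> c" for c'
    proof -
      from that c have "c' \<in> {c'. c' < m \<and> \<phi> c' = r}" by simp
      with r show ?thesis by simp
    qed
    show "c \<in> singleton_points {0..<m} \<phi>"
      unfolding singleton_points_def using c(1) by (auto intro: unique)
  next
    assume "c \<in> singleton_points {0..<m} \<phi>"
    then have "c < m" and unique: "\<And>c'. c' < m \<Longrightarrow> \<phi> c' = \<phi> c \<Longrightarrow> c' = c"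
      unfolding singleton_points_def by auto
    have "{c'. mat_of_fun m \<phi> (\<phi> c) c'} = {c}"
    proof (intro equalityI subsetI)
      fix c' assume "c' \<in> {c'. mat_of_fun m \<phi> (\<phi> c) c'}"
      then have "c' < m" "\<phi> c' = \<phi> c" by (simp_all add: mat_of_fun_def)
      then show "c' \<in> {c}" using unique by blast
    qed (simp add: mat_of_fun_def \<open>c < m\<close>)
    moreover have "\<phi> c < n" using \<phi> \<open>c < m\<close> by auto
    ultimately show "c \<in> singleton_cols n (mat_of_fun m \<phi>)"
      unfolding singleton_cols_def mem_Collect_eq by (intro exI[of _ "\<phi> c"] conjI)
  qed
  then show ?thesis by blast
qed

lemma singleton_cols_subset: "M \<in> S_mat n m \<Longrightarrow> singleton_cols n M \<subseteq> {0..<m}"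
proof
  fix c assume M: "M \<in> S_mat n m" and "c \<in> singleton_cols n M"
  then obtain r where "{c'. M r c'} = {c}" by (auto simp: singleton_cols_def)
  then have "M r c" by blast
  then show "c \<in> {0..<m}" using M by (auto simp: S_mat_def)
qed

definition singleton_block_count :: "nat \<Rightarrow> nat \<Rightarrow> nat \<Rightarrow> nat" where
  "singleton_block_count n m k = (n choose k) * fact k * z_count (n - k) (m - k)"

lemma card_S_mat_singleton_cols:
  assumes "S \<subseteq> {0..<m}"
  shows "card {M \<in> S_mat n m. singleton_cols n M = S} = singleton_block_count n m (card S)"
proof -
  have "card {M \<in> S_mat n m. singleton_cols n M = S}
      = card {\<phi> \<in> {0..<m} \<rightarrow>\<^sub>E {0..<n}. singleton_points {0..<m} \<phi> = S}"
    unfolding card_S_mat_Collect by (rule arg_cong[where f = card], rule Collect_cong) (auto simp: singleton_cols_mat_of_fun)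
  also have "\<dots> = singleton_block_count n m (card S)"
    using assms by (simp add: card_singleton_points_eq singleton_block_count_def z_count_eq_card_stopping_funs)
  finally show ?thesis .
qed

lemma bij_betw_blocks_ibf_states:
  assumes "\<And>i. i < h \<Longrightarrow> A i \<subseteq> S_mat NH f"
  shows "bij_betw (\<lambda>G i. if i < h then G i else (\<lambda>_ _. False))
           (\<Pi>\<^sub>E i\<in>{..<h}. A i) {F \<in> ibf_states h NH f. \<forall>i<h. F i \<in> A i}"
proof (rule bij_betw_byWitness[where f' = "\<lambda>F. restrict F {..<h}"])
  show "\<forall>G\<in>\<Pi>\<^sub>E i\<in>{..<h}. A i. restrict (\<lambda>i. if i < h then G i else (\<lambda>_ _. False)) {..<h} = G"
  proof
    fix G assume "G \<in> (\<Pi>\<^sub>E i\<in>{..<h}. A i)"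
    moreover have "restrict (\<lambda>i. if i < h then G i else (\<lambda>_ _. False)) {..<h} = restrict G {..<h}"
      by (rule restrict_cong) auto
    ultimately show "restrict (\<lambda>i. if i < h then G i else (\<lambda>_ _. False)) {..<h} = G"
      by (simp add: PiE_restrict)
  qed
  show "\<forall>F\<in>{F \<in> ibf_states h NH f. \<forall>i<h. F i \<in> A i}.
          (\<lambda>i. if i < h then restrict F {..<h} i else (\<lambda>_ _. False)) = F"
    by (auto simp: ibf_states_def)
  show "(\<lambda>G i. if i < h then G i else (\<lambda>_ _. False)) ` (\<Pi>\<^sub>E i\<in>{..<h}. A i)
          \<subseteq> {F \<in> ibf_states h NH f. \<forall>i<h. F i \<in> A i}"
  proof (rule image_subsetI)
    fix G assume "G \<in> (\<Pi>\<^sub>E i\<in>{..<h}. A i)"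
    then show "(\<lambda>i. if i < h then G i else (\<lambda>_ _. False)) \<in> {F \<in> ibf_states h NH f. \<forall>i<h. F i \<in> A i}"
      using assms by (auto simp: ibf_states_def PiE_iff)
  qed
  show "(\<lambda>F. restrict F {..<h}) ` {F \<in> ibf_states h NH f. \<forall>i<h. F i \<in> A i} \<subseteq> (\<Pi>\<^sub>E i\<in>{..<h}. A i)"
    by auto
qed

lemma card_ibf_states_blockwise:
  assumes "\<And>i. i < h \<Longrightarrow> A i \<subseteq> S_mat NH f"
  shows "card {F \<in> ibf_states h NH f. \<forall>i<h. F i \<in> A i} = (\<Prod>i<h. card (A i))"
  using bij_betw_same_card[OF bij_betw_blocks_ibf_states[OF assms]] by (simp add: card_PiE)

lemma ibf_states_blockwise_S_mat: "{F \<in> ibf_states h NH f. \<forall>i<h. F i \<in> S_mat NH f} = ibf_states h NH f"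
  by (auto simp: ibf_states_def)

lemma finite_ibf_states: "finite (ibf_states h NH f)"
  using bij_betw_finite[OF bij_betw_blocks_ibf_states[of h "\<lambda>_. S_mat NH f" NH f]]
  by (simp add: ibf_states_blockwise_S_mat finite_PiE finite_S_mat)

lemma card_ibf_states: "card (ibf_states h NH f) = NH ^ (h * f)"
  using card_ibf_states_blockwise[of h "\<lambda>_. S_mat NH f" NH f]
  by (simp add: ibf_states_blockwise_S_mat card_S_mat power_mult mult.commute)

section \<open>Covers and the coefficients \<open>\<Psi>\<close>\<close>

definition covers :: "nat \<Rightarrow> 'a set \<Rightarrow> (nat \<Rightarrow> 'a set) set" where
  "covers h E = {S \<in> {..<h} \<rightarrow>\<^sub>E Pow E. (\<Union>i<h. S i) = E}"

definition covers_of_size :: "nat \<Rightarrow> 'a set \<Rightarrow> (nat \<Rightarrow> nat) \<Rightarrow> (nat \<Rightarrow> 'a set) set" where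
  "covers_of_size h E b = {S \<in> covers h E. \<forall>i<h. card (S i) = b i}"

lemma finite_covers: "finite E \<Longrightarrow> finite (covers h E)"
  unfolding covers_def by (rule finite_subset[of _ "{..<h} \<rightarrow>\<^sub>E Pow E"]) (auto intro: finite_PiE)

lemma finite_covers_of_size: "finite E \<Longrightarrow> finite (covers_of_size h E b)"
  unfolding covers_of_size_def by (simp add: finite_covers)

lemma prod_choose_eq_sum_card_covers_of_size:
  assumes "finite E"
  shows "(\<Prod>i<h. card E choose b i) = (\<Sum>U\<in>Pow E. card (covers_of_size h U b))"
proof -
  define P where "P = (\<Pi>\<^sub>E i\<in>{..<h}. {s. s \<subseteq> E \<and> card s = b i})"
  have "P = (\<Union>U\<in>Pow E. covers_of_size h U b)"
  proof (intro equalityI subsetI)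
    fix S assume "S \<in> P"
    then have "S \<in> covers_of_size h (\<Union>i<h. S i) b" "(\<Union>i<h. S i) \<in> Pow E"
      by (auto simp: P_def covers_of_size_def covers_def)
    then show "S \<in> (\<Union>U\<in>Pow E. covers_of_size h U b)" by blast
  next
    fix S assume "S \<in> (\<Union>U\<in>Pow E. covers_of_size h U b)"
    then show "S \<in> P" by (auto simp: P_def covers_of_size_def covers_def)
  qed
  moreover have "card (\<Union>U\<in>Pow E. covers_of_size h U b) = (\<Sum>U\<in>Pow E. card (covers_of_size h U b))"
  proof (rule card_UN_disjoint)
    show "finite (Pow E)" using assms by simp
    show "\<forall>U\<in>Pow E. finite (covers_of_size h U b)"
      using assms by (auto intro: finite_covers_of_size finite_subset)
    show "\<forall>U\<in>Pow E. \<forall>U'\<in>Pow E. U \<noteq> U' \<longrightarrow> covers_of_size h U b \<inter> covers_of_size h U' b = {}"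
      by (auto simp: covers_of_size_def covers_def)
  qed
  moreover have "card P = (\<Prod>i<h. card E choose b i)"
    using assms by (simp add: P_def card_PiE n_subsets)
  ultimately show ?thesis by simp
qed

lemma sum_proper_subsets_by_card:
  assumes "finite E"
  shows "(\<Sum>U\<in>Pow E - {E}. g (card U)) = (\<Sum>j<card E. of_nat (card E choose j) * g j)"
proof -
  have "card ` (Pow E - {E}) \<subseteq> {..<card E}"
    using assms by (auto intro!: psubset_card_mono)
  then have "(\<Sum>U\<in>Pow E - {E}. g (card U))
      = (\<Sum>j<card E. \<Sum>U\<in>{U. U \<in> Pow E - {E} \<and> card U = j}. g (card U))"
    using assms by (intro sum.group[symmetric]) auto
  also have "\<dots> = (\<Sum>j<card E. \<Sum>U\<in>{U. U \<subseteq> E \<and> card U = j}. g j)"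
    by (intro sum.cong refl) auto
  also have "\<dots> = (\<Sum>j<card E. of_nat (card E choose j) * g j)"
    using assms by (simp add: n_subsets)
  finally show ?thesis .
qed

lemma Psi_0: "Psi h 0 b = (\<Prod>i<h. int (0 choose b i))"
proof (cases "\<forall>i<h. b i = 0")
  case False
  then obtain i where "i < h" "b i \<noteq> 0" by auto
  then have "(\<Prod>i<h. int (0 choose b i)) = 0"
    by (intro prod_zero) auto
  with False show ?thesis by (simp add: Psi.simps)
qed (simp add: Psi.simps)

lemma Psi_eq_card_covers_of_size:
  "finite E \<Longrightarrow> Psi h (card E) b = int (card (covers_of_size h E b))"
proof (induction "card E" arbitrary: E rule: less_induct)
  case (less E)
  have IH: "Psi h (card U) b = int (card (covers_of_size h U b))" if "U \<in> Pow E - {E}" for U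
    using that less by (metis DiffE Pow_iff finite_subset insertCI psubsetI psubset_card_mono)
  have "(\<Prod>i<h. int (card E choose b i)) = (\<Sum>U\<in>Pow E. int (card (covers_of_size h U b)))"
    using prod_choose_eq_sum_card_covers_of_size[OF less.prems, where h = h and b = b] by (metis of_nat_prod of_nat_sum)
  also have "\<dots> = int (card (covers_of_size h E b)) + (\<Sum>U\<in>Pow E - {E}. Psi h (card U) b)"
    using less.prems IH by (simp add: sum.remove[of _ E])
  also have "(\<Sum>U\<in>Pow E - {E}. Psi h (card U) b) = (\<Sum>j<card E. int (card E choose j) * Psi h j b)"
    by (rule sum_proper_subsets_by_card[OF less.prems])
  finally show ?case
    by (cases "card E = 0") (simp_all add: Psi_0 Psi.simps[of h "card E"])
qed

lemma covers_of_size_eq_empty: "finite E \<Longrightarrow> xi h b < card E \<Longrightarrow> covers_of_size h E b = {}"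
proof (rule ccontr)
  assume "finite E" "xi h b < card E" "covers_of_size h E b \<noteq> {}"
  then obtain S where S: "S \<in> covers_of_size h E b" by blast
  then have "card E = card (\<Union>i<h. S i)" by (auto simp: covers_of_size_def covers_def)
  also have "\<dots> \<le> (\<Sum>i<h. card (S i))" by (rule card_UN_le) simp
  also have "\<dots> = xi h b" using S by (simp add: covers_of_size_def xi_def)
  finally show False using \<open>xi h b < card E\<close> by simp
qed

section \<open>Counting states by their first-round columns\<close>

lemma card_eq_sum_card_fibres:
  assumes "finite A" "finite B" "g ` A \<subseteq> B"
  shows "card A = (\<Sum>y\<in>B. card {x\<in>A. g x = y})"
proof -
  have "(\<Sum>y\<in>B. \<Sum>x\<in>{x\<in>A. g x = y}. 1::nat) = (\<Sum>x\<in>A. 1)"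
    by (rule sum.group[OF assms])
  then show ?thesis by simp
qed

definition first_round_cols :: "nat \<Rightarrow> nat \<Rightarrow> (nat \<Rightarrow> nat \<Rightarrow> nat \<Rightarrow> bool) \<Rightarrow> nat set" where
  "first_round_cols h NH F = (\<Union>i<h. singleton_cols NH (F i))"

lemma first_round_cols_subset: "F \<in> ibf_states h NH f \<Longrightarrow> first_round_cols h NH F \<subseteq> {0..<f}"
  using singleton_cols_subset by (fastforce simp: first_round_cols_def ibf_states_def)

lemma card_first_round_cols_eq:
  assumes "E \<subseteq> {0..<f}"
  shows "card {F \<in> ibf_states h NH f. first_round_cols h NH F = E}
       = (\<Sum>S\<in>covers h E. \<Prod>i<h. singleton_block_count NH f (card (S i)))"
proof -
  define blocks where "blocks F = (\<lambda>i\<in>{..<h}. singleton_cols NH (F i))" for F :: "nat \<Rightarrow> nat \<Rightarrow> nat \<Rightarrow> bool"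
  define X where "X = {F \<in> ibf_states h NH f. first_round_cols h NH F = E}"
  have "finite E" using assms finite_subset by blast
  have fibre: "{F \<in> X. blocks F = S}
      = {F \<in> ibf_states h NH f. \<forall>i<h. F i \<in> {M \<in> S_mat NH f. singleton_cols NH M = S i}}"
    if S: "S \<in> covers h E" for S
  proof (intro equalityI subsetI)
    fix F assume "F \<in> {F \<in> X. blocks F = S}"
    then show "F \<in> {F \<in> ibf_states h NH f. \<forall>i<h. F i \<in> {M \<in> S_mat NH f. singleton_cols NH M = S i}}"
      by (auto simp: X_def blocks_def ibf_states_def)
  next
    fix F assume F: "F \<in> {F \<in> ibf_states h NH f. \<forall>i<h. F i \<in> {M \<in> S_mat NH f. singleton_cols NH M = S i}}"
    then have "blocks F = S"
      using S by (intro extensionalityI[of _ "{..<h}"]) (auto simp: blocks_def covers_def PiE_iff)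
    moreover have "first_round_cols h NH F = E"
      using F S by (auto simp: first_round_cols_def covers_def)
    ultimately show "F \<in> {F \<in> X. blocks F = S}" using F by (simp add: X_def)
  qed
  have "blocks ` X \<subseteq> covers h E"
    by (auto simp: X_def blocks_def covers_def first_round_cols_def)
  then have "card X = (\<Sum>S\<in>covers h E. card {F \<in> X. blocks F = S})"
    using \<open>finite E\<close> by (intro card_eq_sum_card_fibres) (auto simp: X_def finite_ibf_states finite_covers)
  also have "\<dots> = (\<Sum>S\<in>covers h E. \<Prod>i<h. singleton_block_count NH f (card (S i)))"
  proof (rule sum.cong[OF refl])
    fix S assume S: "S \<in> covers h E"
    have "card {F \<in> X. blocks F = S} = (\<Prod>i<h. card {M \<in> S_mat NH f. singleton_cols NH M = S i})"
      unfolding fibre[OF S] by (rule card_ibf_states_blockwise) auto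
    also have "\<dots> = (\<Prod>i<h. singleton_block_count NH f (card (S i)))"
      using S assms by (intro prod.cong refl card_S_mat_singleton_cols) (auto simp: covers_def)
    finally show "card {F \<in> X. blocks F = S} = (\<Prod>i<h. singleton_block_count NH f (card (S i)))" .
  qed
  finally show ?thesis by (simp add: X_def)
qed

lemma finite_T_set: "finite (T_set h e)"
  by (simp add: T_set_def finite_PiE)

lemma sum_covers_by_sizes:
  fixes g :: "nat \<Rightarrow> 'a::comm_semiring_1"
  assumes "finite E"
  shows "(\<Sum>S\<in>covers h E. \<Prod>i<h. g (card (S i)))
       = (\<Sum>b\<in>T_set h (card E). of_nat (card (covers_of_size h E b)) * (\<Prod>i<h. g (b i)))"
proof -
  define sizes where "sizes S = (\<lambda>i\<in>{..<h}. card (S i))" for S :: "nat \<Rightarrow> 'b set"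
  have "sizes S \<in> T_set h (card E)" if "S \<in> covers h E" for S
  proof -
    have "card (S i) \<le> card E" if "i < h" for i
      using that \<open>S \<in> covers h E\<close> assms by (intro card_mono) (auto simp: covers_def)
    then show ?thesis
      unfolding sizes_def T_set_def restrict_PiE_iff by simp
  qed
  then have "sizes ` covers h E \<subseteq> T_set h (card E)" by blast
  then have "(\<Sum>S\<in>covers h E. \<Prod>i<h. g (card (S i)))
      = (\<Sum>b\<in>T_set h (card E). \<Sum>S\<in>{S. S \<in> covers h E \<and> sizes S = b}. \<Prod>i<h. g (card (S i)))"
    using assms by (intro sum.group[symmetric] finite_covers finite_T_set)
  also have "\<dots> = (\<Sum>b\<in>T_set h (card E). \<Sum>S\<in>covers_of_size h E b. \<Prod>i<h. g (b i))"
  proof (rule sum.cong[OF refl])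
    fix b assume "b \<in> T_set h (card E)"
    then have "{S. S \<in> covers h E \<and> sizes S = b} = covers_of_size h E b"
      by (auto simp: covers_of_size_def sizes_def T_set_def PiE_iff extensional_def fun_eq_iff)
    then show "(\<Sum>S\<in>{S. S \<in> covers h E \<and> sizes S = b}. \<Prod>i<h. g (card (S i)))
        = (\<Sum>S\<in>covers_of_size h E b. \<Prod>i<h. g (b i))"
      by (auto simp: covers_of_size_def intro!: sum.cong prod.cong)
  qed
  finally show ?thesis by simp
qed

lemma int_card_first_round_cols_eq:
  assumes "E \<subseteq> {0..<f}"
  shows "int (card {F \<in> ibf_states h NH f. first_round_cols h NH F = E})
       = (\<Sum>b\<in>{b \<in> T_set h (card E). card E \<le> xi h b}.
            Psi h (card E) b * (\<Prod>i<h. int (singleton_block_count NH f (b i))))"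
proof -
  have "finite E" using assms finite_subset by blast
  have "int (card {F \<in> ibf_states h NH f. first_round_cols h NH F = E})
      = (\<Sum>S\<in>covers h E. \<Prod>i<h. int (singleton_block_count NH f (card (S i))))"
    by (simp add: card_first_round_cols_eq[OF assms])
  also have "\<dots> = (\<Sum>b\<in>T_set h (card E).
      int (card (covers_of_size h E b)) * (\<Prod>i<h. int (singleton_block_count NH f (b i))))"
    by (rule sum_covers_by_sizes[OF \<open>finite E\<close>])
  also have "\<dots> = (\<Sum>b\<in>T_set h (card E).
      Psi h (card E) b * (\<Prod>i<h. int (singleton_block_count NH f (b i))))"
    by (simp add: Psi_eq_card_covers_of_size[OF \<open>finite E\<close>])
  also have "\<dots> = (\<Sum>b\<in>{b \<in> T_set h (card E). card E \<le> xi h b}.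
      Psi h (card E) b * (\<Prod>i<h. int (singleton_block_count NH f (b i))))"
    using \<open>finite E\<close>
    by (intro sum.mono_neutral_right finite_T_set)
       (auto simp: Psi_eq_card_covers_of_size covers_of_size_eq_empty)
  finally show ?thesis .
qed

lemma int_card_first_round_cols_card_eq_Theta:
  "int (card {F \<in> ibf_states h NH f. card (first_round_cols h NH F) = e}) = Theta NH f h e"
proof -
  define X where "X = {F \<in> ibf_states h NH f. card (first_round_cols h NH F) = e}"
  define subsets where "subsets = {E. E \<subseteq> {0..<f} \<and> card E = e}"
  have "first_round_cols h NH ` X \<subseteq> subsets"
    by (auto simp: X_def subsets_def dest!: first_round_cols_subset)
  then have "card X = (\<Sum>E\<in>subsets. card {F \<in> X. first_round_cols h NH F = E})"
    by (intro card_eq_sum_card_fibres) (auto simp: X_def subsets_def finite_ibf_states)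
  also have "\<dots> = (\<Sum>E\<in>subsets. card {F \<in> ibf_states h NH f. first_round_cols h NH F = E})"
    by (intro sum.cong refl arg_cong[where f = card]) (auto simp: X_def subsets_def)
  finally have "int (card X) = (\<Sum>E\<in>subsets. (\<Sum>b\<in>{b \<in> T_set h e. e \<le> xi h b}.
      Psi h e b * (\<Prod>i<h. int (singleton_block_count NH f (b i)))))"
    by (simp add: int_card_first_round_cols_eq subsets_def)
  then show ?thesis
    by (simp add: X_def subsets_def n_subsets Theta_def singleton_block_count_def)
qed

section \<open>Peeling removes the first-round columns\<close>

lemma peel_terminal_reachable:
  "finite K \<Longrightarrow> \<exists>K'. (peel_step h NH F)\<^sup>*\<^sup>* K K' \<and> peel_terminal h NH F K'"
proof (induction "card K" arbitrary: K rule: less_induct)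
  case (less K)
  show ?case
  proof (cases "peel_terminal h NH F K")
    case False
    then obtain K1 where step: "peel_step h NH F K K1" by (auto simp: peel_terminal_def)
    then obtain c where "c \<in> K" "K1 = K - {c}" by (auto simp: peel_step_def)
    with less.prems have "card K1 < card K" "finite K1" using card_Diff1_less[of K c] by auto
    with less.hyps obtain K' where "(peel_step h NH F)\<^sup>*\<^sup>* K1 K'" "peel_terminal h NH F K'"
      by blast
    with step show ?thesis by (meson converse_rtranclp_into_rtranclp)
  qed blast
qed

lemma peel_final_terminal: "peel_terminal h NH F (peel_final h NH f F)"
  unfolding peel_final_def using peel_terminal_reachable[of "{0..<f}" h NH F]
  by (rule someI2_ex) auto

lemma first_round_cols_disjoint_terminal:
  assumes "peel_terminal h NH F K"
  shows "first_round_cols h NH F \<inter> K = {}"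
proof (rule ccontr)
  assume "first_round_cols h NH F \<inter> K \<noteq> {}"
  then obtain i r c where "i < h" "r < NH" "{c'. F i r c'} = {c}" "c \<in> K"
    by (auto simp: first_round_cols_def singleton_cols_def)
  then have "peel_step h NH F K (K - {c})"
    unfolding peel_step_def by blast
  with assms show False by (auto simp: peel_terminal_def)
qed

lemma card_first_round_cols_le_extracted:
  assumes "F \<in> ibf_states h NH f"
  shows "card (first_round_cols h NH F) \<le> extracted h NH f F"
proof -
  have "first_round_cols h NH F \<subseteq> {0..<f} - peel_final h NH f F"
    using first_round_cols_subset[OF assms] first_round_cols_disjoint_terminal[OF peel_final_terminal]
    by blast
  then show ?thesis
    unfolding extracted_def by (intro card_mono) auto
qed

lemma prob_extracted_ge_lower_bound:
  assumes "NH \<ge> 1"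
  shows "(\<Sum>e = y..f. real_of_int (Theta NH f h e) / real NH ^ (h * f))
         \<le> measure_pmf.prob (pmf_of_set (ibf_states h NH f)) {F. y \<le> extracted h NH f F}"
proof -
  define St where "St = ibf_states h NH f"
  define X where "X F = card (first_round_cols h NH F)" for F
  have "finite St" by (simp add: St_def finite_ibf_states)
  have card_St: "card St = NH ^ (h * f)" by (simp add: St_def card_ibf_states)
  with assms have "St \<noteq> {}" by auto
  have X_le: "X F \<le> f" if "F \<in> St" for F
    using card_mono[OF _ first_round_cols_subset] that by (fastforce simp: X_def St_def)
  have "(\<Sum>e = y..f. card {F \<in> St. X F = e}) = (\<Sum>e = y..f. card {F \<in> {F \<in> St. y \<le> X F}. X F = e})"
    by (intro sum.cong refl arg_cong[where f = card]) auto
  also have "\<dots> = card {F \<in> St. y \<le> X F}"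
    using \<open>finite St\<close> X_le by (intro card_eq_sum_card_fibres[symmetric]) auto
  also have "\<dots> \<le> card {F \<in> St. y \<le> extracted h NH f F}"
    using \<open>finite St\<close> card_first_round_cols_le_extracted
    by (intro card_mono) (auto simp: X_def St_def intro: order_trans)
  finally have "real (\<Sum>e = y..f. card {F \<in> St. X F = e}) \<le> real (card {F \<in> St. y \<le> extracted h NH f F})"
    by (simp only: of_nat_le_iff)
  moreover have "real (\<Sum>e = y..f. card {F \<in> St. X F = e}) = (\<Sum>e = y..f. real_of_int (Theta NH f h e))"
    unfolding of_nat_sum
    by (intro sum.cong refl) (simp flip: int_card_first_round_cols_card_eq_Theta add: X_def St_def)
  ultimately have "(\<Sum>e = y..f. real_of_int (Theta NH f h e)) \<le> real (card {F \<in> St. y \<le> extracted h NH f F})"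
    by simp
  then have "(\<Sum>e = y..f. real_of_int (Theta NH f h e)) / card St
      \<le> real (card {F \<in> St. y \<le> extracted h NH f F}) / card St"
    by (rule divide_right_mono) simp
  then show ?thesis
    using \<open>St \<noteq> {}\<close> \<open>finite St\<close>
    by (simp add: measure_pmf_of_set card_ibf_states Int_def sum_divide_distrib St_def)
qed

lemma real_divide_less_iff_less_nat_ceiling:
  fixes Y f :: nat
  assumes "0 < f"
  shows "real Y / real f < R \<longleftrightarrow> Y < nat \<lceil>R * real f\<rceil>"
proof -
  have "real Y / real f < R \<longleftrightarrow> real Y < R * real f"
    using assms by (simp add: divide_less_eq)
  also have "\<dots> \<longleftrightarrow> Y < nat \<lceil>R * real f\<rceil>"
    by linarith
  finally show ?thesis .
qed

theorem theorem2:
  fixes h NH f :: nat and R :: real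
  assumes "h \<ge> 1" and "NH \<ge> 1" and "f \<ge> 1" and "0 < R" and "R \<le> 1"
  shows "measure_pmf.prob (pmf_of_set (ibf_states h NH f))
           {F. real (extracted h NH f F) / real f < R}
         \<le> 1 - (\<Sum>e = nat \<lceil>R * real f\<rceil>..f. real_of_int (Theta NH f h e) / real NH ^ (h * f))"
proof -
  define y where "y = nat \<lceil>R * real f\<rceil>"
  have "{F. real (extracted h NH f F) / real f < R} = UNIV - {F. y \<le> extracted h NH f F}"
    using real_divide_less_iff_less_nat_ceiling[of f _ R] assms(3) unfolding y_def not_le[symmetric]
    by auto
  then have "measure_pmf.prob (pmf_of_set (ibf_states h NH f)) {F. real (extracted h NH f F) / real f < R}
      = 1 - measure_pmf.prob (pmf_of_set (ibf_states h NH f)) {F. y \<le> extracted h NH f F}"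
    using measure_pmf.prob_compl[of "{F. y \<le> extracted h NH f F}" "pmf_of_set (ibf_states h NH f)"]
    by simp
  with prob_extracted_ge_lower_bound[OF assms(2), of f h y] show ?thesis
    by (simp add: y_def)
qed

end
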